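(* Let $\mathcal A$ be the attraction basin of $x_0$ for the auxiliary flow $\Phi$. Then $\mathcal A$ is open, and: (i) the restriction $f|_{\mathcal A}$ is injective; (ii) $f(\mathcal A)$ is star-shaped with respect to $y_0=f(x_0)$; (iii) $\mathcal A$ is maximal with these properties: every open connected set $C\subseteq D$ containing $x_0$ such that $f|_C$ is injective and $f(C)$ is star-shaped with respect to $y_0$ satisfies $C\subseteq\mathcal A$.
   Context: Standing setting: $X,Y$ are real Banach spaces, $D\subseteq X$ is a nonempty open connected set, $f:D\to Y$ is a local homeomorphism (every point has an open neighbourhood mapped homeomorphically onto an open set), $x_0\in D$, $y_0=f(x_0)$. A flow in $D$ is a map $\Phi:D_\Phi\to D$ such that: (i) $D_\Phi$ is an open subset of $D\times\mathbb R$ and $\Phi$ is continuous; (ii) for each $x\in D$, $\{t:(x,t)\in D_\Phi\}$ is an interval containing $0$; (iii) $\Phi(x,0)=x$; (iv) if $(x,t_1),(x,t_1+t_2)\in D_\Phi$ then $(\Phi(x,t_1),t_2)\in D_\Phi$ and $\Phi(\Phi(x,t_1),t_2)=\Phi(x,t_1+t_2)$. The trajectory through $x$ is global in the future if $\{x\}\times[0,+\infty)\subseteq D_\Phi$. Let $\Psi(y,t)=y_0+e^{-t}(y-y_0)$ for $y\in Y,t\in\mathbb R$. The auxiliary flow $\Phi$ is the unique flow in $D$ of maximal domain with $f(\Phi(x,t))=\Psi(f(x),t)$ for all $(x,t)\in D_\Phi$; for each $x$, $t\mapsto\Phi(x,t)$ is the maximal continuous lifting by $f$ of $t\mapsto\Psi(f(x),t)$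 through $x$ at $t=0$. The attraction basin $\mathcal A$ of $x_0$ is the set of $x\in D$ whose trajectory is global in the future and satisfies $\Phi(x,t)\to x_0$ as $t\to+\infty$. *)

theory Defs
  imports "HOL-Analysis.Analysis"
begin

definition local_homeo_on :: "'a::topological_space set \<Rightarrow> ('a \<Rightarrow> 'b::topological_space) \<Rightarrow> bool" where
  "local_homeo_on D f \<longleftrightarrow>
     (\<forall>x\<in>D. \<exists>U. open U \<and> x \<in> U \<and> U \<subseteq> D \<and> open (f ` U) \<and>
                 (\<exists>g. homeomorphism U (f ` U) f g))"

definition is_flow :: "'a::topological_space set \<Rightarrow> ('a \<times> real) set \<Rightarrow> ('a \<times> real \<Rightarrow> 'a) \<Rightarrow> bool" where
  "is_flow D DPhi Phi \<longleftrightarrow>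
     open DPhi \<and> DPhi \<subseteq> D \<times> UNIV \<and> Phi ` DPhi \<subseteq> D \<and> continuous_on DPhi Phi \<and>
     (\<forall>x\<in>D. is_interval {t. (x, t) \<in> DPhi} \<and> (x, 0) \<in> DPhi) \<and>
     (\<forall>x\<in>D. Phi (x, 0) = x) \<and>
     (\<forall>x t1 t2. (x, t1) \<in> DPhi \<longrightarrow> (x, t1 + t2) \<in> DPhi \<longrightarrow>
        (Phi (x, t1), t2) \<in> DPhi \<and> Phi (Phi (x, t1), t2) = Phi (x, t1 + t2))"

definition Psi :: "'b::real_normed_vector \<Rightarrow> 'b \<Rightarrow> real \<Rightarrow> 'b" where
  "Psi y0 y t = y0 + exp (- t) *\<^sub>R (y - y0)"

definition lifts_Psi :: "('a \<Rightarrow> 'b::real_normed_vector) \<Rightarrow> 'b \<Rightarrow> ('a \<times> real) set \<Rightarrow> ('a \<times> real \<Rightarrow> 'a) \<Rightarrow> bool" where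
  "lifts_Psi f y0 DPhi Phi \<longleftrightarrow> (\<forall>(x, t)\<in>DPhi. f (Phi (x, t)) = Psi y0 (f x) t)"

definition auxiliary_flow :: "'a::topological_space set \<Rightarrow> ('a \<Rightarrow> 'b::real_normed_vector) \<Rightarrow> 'a
     \<Rightarrow> ('a \<times> real) set \<Rightarrow> ('a \<times> real \<Rightarrow> 'a) \<Rightarrow> bool" where
  "auxiliary_flow D f x0 DPhi Phi \<longleftrightarrow>
     is_flow D DPhi Phi \<and> lifts_Psi f (f x0) DPhi Phi \<and>
     (\<forall>DPhi' Phi'. is_flow D DPhi' Phi' \<and> lifts_Psi f (f x0) DPhi' Phi' \<longrightarrow> DPhi' \<subseteq> DPhi)"

definition attraction_basin :: "'a::topological_space set \<Rightarrow> 'a \<Rightarrow> ('a \<times> real) set \<Rightarrow> ('a \<times> real \<Rightarrow> 'a) \<Rightarrow> 'a set" where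
  "attraction_basin D x0 DPhi Phi =
     {x \<in> D. (\<forall>t\<ge>0. (x, t) \<in> DPhi) \<and> ((\<lambda>t. Phi (x, t)) \<longlongrightarrow> x0) at_top}"

definition star_shaped_wrt :: "'b::real_vector \<Rightarrow> 'b set \<Rightarrow> bool" where
  "star_shaped_wrt y0 S \<longleftrightarrow> y0 \<in> S \<and> (\<forall>y\<in>S. closed_segment y0 y \<subseteq> S)"

end

theory Submission
  imports Defs
begin

text \<open>On a set C where f is injective and f(C) is star-shaped with respect to y0, the flow is
  forced: \<open>\<Phi>(x,t) = (f|\<^sub>C)\<^sup>-\<^sup>1(\<Psi>(f x,t))\<close>, because \<open>\<Psi>(f x,\<cdot>)\<close> stays in f(C) for
  \<open>t \<ge> 0\<close> and liftings through a local homeomorphism are unique. That these trajectories are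
  global follows from the maximality of the auxiliary flow: routing every orbit that meets C
  through the chart \<open>(f|\<^sub>C)\<^sup>-\<^sup>1\<close> yields a flow with the lifting property whose domain contains
  \<open>C \<times> [0,\<infinity>)\<close>, so this domain lies in the domain of \<open>\<Phi>\<close>. Hence C is contained in the basin.
  Applied to a small neighbourhood of x0, this shows that every trajectory in the basin eventually
  enters a neighbourhood of x0 on which f is injective; since \<open>\<Phi>(\<cdot>,T)\<close> is inverted by
  \<open>\<Phi>(\<cdot>,-T)\<close>, openness of the basin and injectivity of f on it follow, and star-shapedness
  of its image is the lifting property along the rays \<open>\<Psi>(y,\<cdot>)\<close>.\<close>

lemma lifting_unique:
  fixes p q :: "'c::topological_space \<Rightarrow> 'a::t2_space" and f :: "'a \<Rightarrow> 'b"
  assumes locally_inj: "\<And>x. x \<in> D \<Longrightarrow> \<exists>U. open U \<and> x \<in> U \<and> inj_on f U"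
    and "connected S" and p: "continuous_on S p" and q: "continuous_on S q"
    and "p ` S \<subseteq> D" and same_image: "\<And>s. s \<in> S \<Longrightarrow> f (p s) = f (q s)"
    and "a \<in> S" "p a = q a" and "b \<in> S"
  shows "p b = q b"
proof -
  let ?T = "{s\<in>S. p s = q s}"
  have "closed {z::'a \<times> 'a. fst z = snd z}"
    by (rule closed_Collect_eq) (auto intro: continuous_intros)
  moreover have "continuous_on S (\<lambda>s. (p s, q s))" using p q by (intro continuous_intros)
  ultimately have "closedin (top_of_set S) (S \<inter> (\<lambda>s. (p s, q s)) -` {z. fst z = snd z})"
    by (intro continuous_closedin_preimage)
  moreover have "S \<inter> (\<lambda>s. (p s, q s)) -` {z. fst z = snd z} = ?T" by auto
  ultimately have "closedin (top_of_set S) ?T" by simp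
  moreover have "openin (top_of_set S) ?T"
  proof (subst openin_subopen, intro ballI)
    fix s assume s: "s \<in> ?T"
    then have "p s \<in> D" using \<open>p ` S \<subseteq> D\<close> by auto
    then obtain U where U: "open U" "p s \<in> U" "inj_on f U" using locally_inj by blast
    let ?N = "(S \<inter> p -` U) \<inter> (S \<inter> q -` U)"
    have "openin (top_of_set S) ?N"
      using continuous_openin_preimage_gen[OF p U(1)] continuous_openin_preimage_gen[OF q U(1)]
      by (rule openin_Int)
    moreover have "s \<in> ?N" using s U(2) by auto
    moreover have "?N \<subseteq> ?T" using U(3) same_image by (auto simp: inj_on_def)
    ultimately show "\<exists>T. openin (top_of_set S) T \<and> s \<in> T \<and> T \<subseteq> ?T" by blast
  qed
  ultimately have "?T = {} \<or> ?T = S"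
    using \<open>connected S\<close> unfolding connected_clopen by blast
  then show ?thesis using assms(7-9) by auto
qed

lemma local_homeo_on_locally_inj:
  assumes "local_homeo_on D f" "x \<in> D"
  shows "\<exists>U. open U \<and> x \<in> U \<and> inj_on f U"
proof -
  obtain U g where "open U" "x \<in> U" "homeomorphism U (f ` U) f g"
    using assms unfolding local_homeo_on_def by blast
  then show ?thesis using homeomorphism_apply1 inj_on_inverseI by metis
qed

lemma local_homeo_on_imp_continuous_on:
  assumes "local_homeo_on D f"
  shows "continuous_on D f"
proof -
  let ?\<U> = "{U. open U \<and> U \<subseteq> D \<and> continuous_on U f}"
  have "D \<subseteq> \<Union>?\<U>"
  proof
    fix x assume "x \<in> D"
    then obtain U g where "open U" "x \<in> U" "U \<subseteq> D" "homeomorphism U (f ` U) f g"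
      using assms unfolding local_homeo_on_def by blast
    then show "x \<in> \<Union>?\<U>" unfolding homeomorphism_def by blast
  qed
  then have "D = \<Union>?\<U>" by blast
  moreover have "continuous_on (\<Union>?\<U>) f"
    by (rule continuous_on_open_Union) auto
  ultimately show ?thesis by simp
qed

lemma local_homeo_on_open_image:
  assumes lh: "local_homeo_on D f" and "open V" "V \<subseteq> D"
  shows "open (f ` V)"
  unfolding open_subopen[of "f ` V"]
proof
  fix y assume "y \<in> f ` V"
  then obtain x where x: "x \<in> V" "y = f x" by auto
  then obtain U h where U: "open U" "x \<in> U" "open (f ` U)" "homeomorphism U (f ` U) f h"
    using lh \<open>V \<subseteq> D\<close> unfolding local_homeo_on_def by blast
  have "openin (top_of_set U) (V \<inter> U)"
    using \<open>open V\<close> by (simp add: openin_open_Int Int_commute)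
  then have "openin (top_of_set (f ` U)) (f ` (V \<inter> U))"
    by (rule homeomorphism_imp_open_map[OF U(4)])
  then have "open (f ` (V \<inter> U))" using U(3) by (rule openin_open_trans)
  then show "\<exists>T. open T \<and> y \<in> T \<and> T \<subseteq> f ` V"
    using x U(2) by blast
qed

lemma Psi_0 [simp]: "Psi y0 y 0 = y"
  by (simp add: Psi_def)

lemma Psi_add: "Psi y0 (Psi y0 y a) b = Psi y0 y (a + b)"
  by (simp add: Psi_def scaleR_scaleR exp_add[symmetric] algebra_simps)

lemma Psi_in_closed_segment: "t \<ge> 0 \<Longrightarrow> Psi y0 y t \<in> closed_segment y0 y"
  unfolding closed_segment_def Psi_def
  by (rule CollectI, rule exI[of _ "exp (-t)"]) (auto simp: algebra_simps)

lemma closed_segment_eq_Psi: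
  assumes "p \<in> closed_segment y0 y" "p \<noteq> y0"
  obtains t where "t \<ge> 0" "Psi y0 y t = p"
proof -
  obtain u where u: "0 \<le> u" "u \<le> 1" "p = (1 - u) *\<^sub>R y0 + u *\<^sub>R y"
    using assms(1) unfolding closed_segment_def by blast
  with assms(2) have "u > 0" by (cases "u = 0") auto
  then have "Psi y0 y (- ln u) = p"
    by (simp add: Psi_def u(3) algebra_simps)
  moreover have "- ln u \<ge> 0" using \<open>u > 0\<close> u(2) by simp
  ultimately show ?thesis using that by blast
qed

lemma tendsto_Psi_at_top: "((\<lambda>t. Psi y0 y t) \<longlongrightarrow> y0) at_top"
proof -
  have "((\<lambda>t::real. exp (-t)) \<longlongrightarrow> 0) at_top"
    using filterlim_compose[OF exp_at_bot filterlim_uminus_at_bot_at_top] by simp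
  then have "((\<lambda>t. y0 + exp (-t) *\<^sub>R (y - y0)) \<longlongrightarrow> y0 + 0 *\<^sub>R (y - y0)) at_top"
    by (intro tendsto_intros)
  then show ?thesis by (simp add: Psi_def)
qed

lemma continuous_on_Psi [continuous_intros]:
  "continuous_on S a \<Longrightarrow> continuous_on S b \<Longrightarrow> continuous_on S (\<lambda>x. Psi y0 (a x) (b x))"
  unfolding Psi_def by (intro continuous_intros)

lemma tendsto_at_top_shift:
  fixes F :: "real \<Rightarrow> 'a::topological_space"
  assumes "(F \<longlongrightarrow> L) at_top"
  shows "((\<lambda>s. F (t + s)) \<longlongrightarrow> L) at_top"
  using filterlim_compose[OF assms filterlim_tendsto_add_at_top[OF tendsto_const filterlim_ident]] .

locale auxiliary_flow_basin =
  fixes D :: "'a::t2_space set" and f :: "'a \<Rightarrow> 'b::real_normed_vector"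
    and DPhi :: "('a \<times> real) set" and Phi :: "'a \<times> real \<Rightarrow> 'a" and x0 :: 'a
  assumes local_homeo: "local_homeo_on D f" and x0_in_D: "x0 \<in> D"
    and auxiliary_flow: "auxiliary_flow D f x0 DPhi Phi"
begin

abbreviation "y0 \<equiv> f x0"
abbreviation "A \<equiv> attraction_basin D x0 DPhi Phi"

lemma mem_basin_iff:
  "x \<in> A \<longleftrightarrow> x \<in> D \<and> (\<forall>t\<ge>0. (x, t) \<in> DPhi) \<and> ((\<lambda>t. Phi (x, t)) \<longlongrightarrow> x0) at_top"
  by (simp add: attraction_basin_def)

lemma is_flow: "is_flow D DPhi Phi"
  using auxiliary_flow by (simp add: auxiliary_flow_def)

lemma f_Phi: "(x, t) \<in> DPhi \<Longrightarrow> f (Phi (x, t)) = Psi y0 (f x) t"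
  using auxiliary_flow by (auto simp: auxiliary_flow_def lifts_Psi_def)

lemma flow_domain_maximal: "is_flow D E P \<Longrightarrow> lifts_Psi f y0 E P \<Longrightarrow> E \<subseteq> DPhi"
  using auxiliary_flow by (auto simp: auxiliary_flow_def)

lemma open_DPhi: "open DPhi"
  using is_flow by (simp add: is_flow_def)

lemma DPhi_in_D: "(x, t) \<in> DPhi \<Longrightarrow> x \<in> D"
  using is_flow by (auto simp: is_flow_def)

lemma Phi_in_D: "(x, t) \<in> DPhi \<Longrightarrow> Phi (x, t) \<in> D"
  using is_flow by (auto simp: is_flow_def)

lemma continuous_on_Phi: "continuous_on DPhi Phi"
  using is_flow by (simp add: is_flow_def)

lemma zero_in_DPhi: "x \<in> D \<Longrightarrow> (x, 0) \<in> DPhi"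
  using is_flow by (simp add: is_flow_def)

lemma Phi_zero [simp]: "x \<in> D \<Longrightarrow> Phi (x, 0) = x"
  using is_flow by (simp add: is_flow_def)

lemma is_interval_DPhi_slice: "x \<in> D \<Longrightarrow> is_interval {t. (x, t) \<in> DPhi}"
  using is_flow by (simp add: is_flow_def)

lemma DPhi_between:
  "(x, a) \<in> DPhi \<Longrightarrow> (x, b) \<in> DPhi \<Longrightarrow> a \<le> s \<Longrightarrow> s \<le> b \<Longrightarrow> (x, s) \<in> DPhi"
  using is_interval_DPhi_slice[OF DPhi_in_D] unfolding is_interval_1 by blast

lemma is_interval_DPhi_slice_shift:
  assumes "x \<in> D"
  shows "is_interval {t. (x, t - c) \<in> DPhi}"
  unfolding is_interval_1
proof (intro ballI allI impI)
  fix t1 t2 s assume "t1 \<in> {t. (x, t - c) \<in> DPhi}" "t2 \<in> {t. (x, t - c) \<in> DPhi}" "t1 \<le> s \<and> s \<le> t2"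
  then show "s \<in> {t. (x, t - c) \<in> DPhi}" using DPhi_between[of x "t1 - c" "t2 - c" "s - c"] by auto
qed

lemma DPhi_closed_segment:
  "(x, a) \<in> DPhi \<Longrightarrow> (x, b) \<in> DPhi \<Longrightarrow> s \<in> closed_segment a b \<Longrightarrow> (x, s) \<in> DPhi"
  by (auto simp: closed_segment_eq_real_ivl split: if_splits intro: DPhi_between)

lemma Phi_diff:
  assumes "(x, a) \<in> DPhi" "(x, b) \<in> DPhi"
  shows "(Phi (x, a), b - a) \<in> DPhi \<and> Phi (Phi (x, a), b - a) = Phi (x, b)"
proof -
  have "\<forall>x t1 t2. (x, t1) \<in> DPhi \<longrightarrow> (x, t1 + t2) \<in> DPhi \<longrightarrow>
        (Phi (x, t1), t2) \<in> DPhi \<and> Phi (Phi (x, t1), t2) = Phi (x, t1 + t2)"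
    using is_flow unfolding is_flow_def by blast
  from this[rule_format, of x a "b - a"] assms show ?thesis by simp
qed

lemma Phi_backward:
  assumes "(x, T) \<in> DPhi"
  shows "(Phi (x, T), - T) \<in> DPhi \<and> Phi (Phi (x, T), - T) = x"
  using Phi_diff[OF assms zero_in_DPhi[OF DPhi_in_D[OF assms]]] DPhi_in_D[OF assms] by simp

lemma continuous_on_f: "continuous_on D f"
  using local_homeo by (rule local_homeo_on_imp_continuous_on)

end

locale star_chart = auxiliary_flow_basin +
  fixes C :: "'a set"
  assumes open_C: "open C" and C_subset_D: "C \<subseteq> D" and inj_C: "inj_on f C"
    and star_C: "star_shaped_wrt (f x0) (f ` C)"
begin

definition chart :: "'b \<Rightarrow> 'a" where "chart = inv_into C f"

lemma chart_in_C: "y \<in> f ` C \<Longrightarrow> chart y \<in> C"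
  unfolding chart_def by (rule inv_into_into)

lemma f_chart [simp]: "y \<in> f ` C \<Longrightarrow> f (chart y) = y"
  unfolding chart_def by (rule f_inv_into_f)

lemma chart_f [simp]: "x \<in> C \<Longrightarrow> chart (f x) = x"
  unfolding chart_def using inj_C by (rule inv_into_f_f)

lemma open_image_C: "open (f ` C)"
  using local_homeo open_C C_subset_D by (rule local_homeo_on_open_image)

lemma continuous_on_chart: "continuous_on (f ` C) chart"
proof (rule continuous_on_inverse_open_map[where S=C and f=f])
  show "continuous_on C f" using continuous_on_f C_subset_D by (rule continuous_on_subset)
  fix U assume "openin (top_of_set C) U"
  then have "open U" "U \<subseteq> C" using open_C openin_open_trans openin_imp_subset by blast+
  then have "open (f ` U)" using C_subset_D by (intro local_homeo_on_open_image[OF local_homeo]) auto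
  then show "openin (top_of_set (f ` C)) (f ` U)" using \<open>U \<subseteq> C\<close> by (intro open_subset) auto
qed simp_all

lemma y0_in_image_C: "y0 \<in> f ` C"
  using star_C by (simp add: star_shaped_wrt_def)

text \<open>The ray \<open>\<Psi>(y,\<cdot>)\<close> runs along the segment towards y0, so it stays in f(C) once it is there.\<close>
lemma Psi_in_image_C_mono:
  assumes "Psi y0 y c \<in> f ` C" "c \<le> s"
  shows "Psi y0 y s \<in> f ` C"
proof -
  have "Psi y0 y s = Psi y0 (Psi y0 y c) (s - c)" by (simp add: Psi_add)
  also have "\<dots> \<in> closed_segment y0 (Psi y0 y c)" using assms(2) by (intro Psi_in_closed_segment) simp
  finally show ?thesis using assms(1) star_C unfolding star_shaped_wrt_def by blast
qed

lemma Phi_eq_chart: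
  assumes w: "w \<in> C" and wt: "(w, t) \<in> DPhi" and image: "Psi y0 (f w) t \<in> f ` C"
  shows "Phi (w, t) = chart (Psi y0 (f w) t)"
proof (rule lifting_unique[where D=D and f=f and S="closed_segment 0 t" and a=0])
  have w0: "(w, 0) \<in> DPhi" using w C_subset_D zero_in_DPhi by blast
  have seg_DPhi: "(w, \<sigma>) \<in> DPhi" if "\<sigma> \<in> closed_segment 0 t" for \<sigma>
    using DPhi_closed_segment[OF w0 wt that] .
  have seg_image: "Psi y0 (f w) \<sigma> \<in> f ` C" if "\<sigma> \<in> closed_segment 0 t" for \<sigma>
  proof (cases "0 \<le> t")
    case True
    then have "0 \<le> \<sigma>" using that by (auto simp: closed_segment_eq_real_ivl)
    then show ?thesis using Psi_in_image_C_mono[of "f w" 0] w by simp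
  next
    case False
    then have "t \<le> \<sigma>" using that by (auto simp: closed_segment_eq_real_ivl)
    then show ?thesis using Psi_in_image_C_mono image by blast
  qed
  show "continuous_on (closed_segment 0 t) (\<lambda>\<sigma>. Phi (w, \<sigma>))"
    by (rule continuous_on_compose2[OF continuous_on_Phi]) (auto intro!: continuous_intros seg_DPhi)
  show "continuous_on (closed_segment 0 t) (\<lambda>\<sigma>. chart (Psi y0 (f w) \<sigma>))"
    by (rule continuous_on_compose2[OF continuous_on_chart])
      (auto intro!: continuous_intros seg_image)
  show "(\<lambda>\<sigma>. Phi (w, \<sigma>)) ` closed_segment 0 t \<subseteq> D" using seg_DPhi Phi_in_D by blast
  show "f (Phi (w, \<sigma>)) = f (chart (Psi y0 (f w) \<sigma>))" if "\<sigma> \<in> closed_segment 0 t" for \<sigma>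
    using f_Phi[OF seg_DPhi[OF that]] seg_image[OF that] by simp
qed (use w C_subset_D local_homeo local_homeo_on_locally_inj in auto)

text \<open>The extension of \<open>\<Phi>\<close>: a point x whose orbit meets C is sent, at any time c with
  \<open>\<Psi>(f x,c) \<in> f(C)\<close>, to the point of C above \<open>\<Psi>(f x,c)\<close>, and is then moved by \<open>\<Phi>\<close>
  for the remaining time \<open>t - c\<close>. By uniqueness of liftings the result does not depend on c,
  so the choice made by SOME in ext_flow is harmless.\<close>

definition saturation :: "'a set" where
  "saturation = {x. \<exists>a. (x, a) \<in> DPhi \<and> Phi (x, a) \<in> C}"

definition jump_dom :: "real \<Rightarrow> ('a \<times> real) set" where
  "jump_dom c = {(x, t). x \<in> saturation \<and> Psi y0 (f x) c \<in> f ` C}"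

definition jump :: "real \<Rightarrow> 'a \<times> real \<Rightarrow> 'a \<times> real" where
  "jump c p = (chart (Psi y0 (f (fst p)) c), snd p - c)"

definition dom_via :: "real \<Rightarrow> ('a \<times> real) set" where
  "dom_via c = jump_dom c \<inter> jump c -` DPhi"

definition ext_dom :: "('a \<times> real) set" where
  "ext_dom = DPhi \<union> (\<Union>c. dom_via c)"

definition ext_flow :: "'a \<times> real \<Rightarrow> 'a" where
  "ext_flow p = (if p \<in> DPhi then Phi p else Phi (jump (SOME c. p \<in> dom_via c) p))"

lemma jump_apply [simp]: "jump c (x, t) = (chart (Psi y0 (f x) c), t - c)"
  by (simp add: jump_def)

lemma dom_via_iff:
  "(x, t) \<in> dom_via c \<longleftrightarrow>
     x \<in> saturation \<and> Psi y0 (f x) c \<in> f ` C \<and> (chart (Psi y0 (f x) c), t - c) \<in> DPhi"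
  by (simp add: dom_via_def jump_dom_def)

lemma saturation_in_D: "x \<in> saturation \<Longrightarrow> x \<in> D"
  unfolding saturation_def using DPhi_in_D by blast

lemma open_saturation: "open saturation"
proof -
  have "saturation = fst ` (DPhi \<inter> Phi -` C)" unfolding saturation_def by force
  moreover have "open (DPhi \<inter> Phi -` C)"
    by (rule continuous_open_preimage[OF continuous_on_Phi open_DPhi open_C])
  ultimately show ?thesis using open_image_fst by metis
qed

lemma open_jump_dom: "open (jump_dom c)"
proof -
  have "continuous_on (saturation \<times> UNIV) (\<lambda>p. Psi y0 (f (fst p)) c)"
    by (intro continuous_intros continuous_on_compose2[OF continuous_on_f])
      (auto simp: saturation_in_D)
  moreover have "jump_dom c = (saturation \<times> UNIV) \<inter> (\<lambda>p. Psi y0 (f (fst p)) c) -` (f ` C)"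
    by (auto simp: jump_dom_def)
  ultimately show ?thesis
    using continuous_open_preimage open_Times open_saturation open_image_C by (metis open_UNIV)
qed

lemma continuous_on_jump: "continuous_on (jump_dom c) (jump c)"
proof -
  have "continuous_on (jump_dom c) (\<lambda>p. f (fst p))"
    by (rule continuous_on_compose2[OF continuous_on_f])
      (auto intro: continuous_intros simp: jump_dom_def saturation_in_D)
  then have "continuous_on (jump_dom c) (\<lambda>p. chart (Psi y0 (f (fst p)) c))"
    by (intro continuous_on_compose2[OF continuous_on_chart] continuous_intros)
      (auto simp: jump_dom_def)
  then show ?thesis unfolding jump_def by (intro continuous_intros)
qed

lemma open_dom_via: "open (dom_via c)"
  unfolding dom_via_def
  using continuous_open_preimage[OF continuous_on_jump open_jump_dom open_DPhi] .

lemma continuous_on_Phi_jump: "continuous_on (dom_via c) (\<lambda>p. Phi (jump c p))"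
  by (rule continuous_on_compose2[OF continuous_on_Phi continuous_on_subset[OF continuous_on_jump]])
    (auto simp: dom_via_def)

text \<open>If \<open>t \<ge> c1\<close>, both sides are the point of C above \<open>\<Psi>(f x,t)\<close>; otherwise flowing
  the second base point back by \<open>c2 - c1\<close> reaches the first one.\<close>
lemma Phi_jump_indep_le:
  assumes p1: "(x, t) \<in> dom_via c1" and p2: "(x, t) \<in> dom_via c2" and "c1 \<le> c2"
  shows "Phi (jump c1 (x, t)) = Phi (jump c2 (x, t))"
proof -
  define w1 where "w1 = chart (Psi y0 (f x) c1)"
  define w2 where "w2 = chart (Psi y0 (f x) c2)"
  have c1: "Psi y0 (f x) c1 \<in> f ` C" "(w1, t - c1) \<in> DPhi" using p1 by (auto simp: dom_via_iff w1_def)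
  have c2: "Psi y0 (f x) c2 \<in> f ` C" "(w2, t - c2) \<in> DPhi" using p2 by (auto simp: dom_via_iff w2_def)
  have w: "w1 \<in> C" "w2 \<in> C" "f w1 = Psi y0 (f x) c1" "f w2 = Psi y0 (f x) c2"
    using c1 c2 chart_in_C by (auto simp: w1_def w2_def)
  show ?thesis
  proof (cases "c1 \<le> t")
    case True
    then have t: "Psi y0 (f x) t \<in> f ` C" using Psi_in_image_C_mono c1(1) by blast
    show ?thesis
      using Phi_eq_chart[OF w(1) c1(2)] Phi_eq_chart[OF w(2) c2(2)] t w
      by (simp add: Psi_add w1_def w2_def)
  next
    case False
    have w2_back: "(w2, c1 - c2) \<in> DPhi"
      using DPhi_between[OF c2(2) zero_in_DPhi] w(2) C_subset_D False \<open>c1 \<le> c2\<close> by auto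
    then have "Phi (w2, c1 - c2) = w1"
      using Phi_eq_chart[OF w(2) w2_back] w c1(1) by (simp add: Psi_add w1_def)
    then show ?thesis
      using Phi_diff[OF w2_back c2(2)] by (simp add: w1_def w2_def)
  qed
qed

lemma Phi_jump_indep:
  "p \<in> dom_via c1 \<Longrightarrow> p \<in> dom_via c2 \<Longrightarrow> Phi (jump c1 p) = Phi (jump c2 p)"
  using Phi_jump_indep_le by (metis linear prod.exhaust)

lemma DPhi_in_dom_via:
  assumes a: "(x, a) \<in> DPhi" "Phi (x, a) \<in> C" and t: "(x, t) \<in> DPhi"
  shows "(x, t) \<in> dom_via a \<and> Phi (jump a (x, t)) = Phi (x, t)"
proof -
  have "Psi y0 (f x) a \<in> f ` C" "chart (Psi y0 (f x) a) = Phi (x, a)"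
    using f_Phi[OF a(1)] a(2) by (metis image_eqI, metis chart_f)
  moreover have "x \<in> saturation" using a unfolding saturation_def by blast
  ultimately show ?thesis
    using Phi_diff[OF a(1) t] by (auto simp: dom_via_iff)
qed

lemma ext_flow_via: "p \<in> dom_via c \<Longrightarrow> ext_flow p = Phi (jump c p)"
proof (cases p)
  case (Pair x t)
  assume p: "p \<in> dom_via c"
  show ?thesis
  proof (cases "p \<in> DPhi")
    case True
    obtain a where "(x, a) \<in> DPhi" "Phi (x, a) \<in> C"
      using p Pair by (auto simp: dom_via_iff saturation_def)
    with True have "p \<in> dom_via a" "Phi (jump a p) = Phi p"
      using DPhi_in_dom_via Pair by auto
    then show ?thesis using True Phi_jump_indep[OF p] by (simp add: ext_flow_def)
  next
    case False
    have "p \<in> dom_via (SOME c. p \<in> dom_via c)" using p by (rule someI)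
    then show ?thesis using Phi_jump_indep[OF p] False by (simp add: ext_flow_def)
  qed
qed

lemma ext_flow_DPhi: "p \<in> DPhi \<Longrightarrow> ext_flow p = Phi p"
  by (simp add: ext_flow_def)

lemma ext_dom_in_dom_via:
  assumes "(x, t) \<in> ext_dom" "x \<in> saturation"
  obtains c where "(x, t) \<in> dom_via c"
proof (cases "(x, t) \<in> DPhi")
  case True
  obtain a where "(x, a) \<in> DPhi" "Phi (x, a) \<in> C"
    using assms(2) by (auto simp: saturation_def)
  then show ?thesis using DPhi_in_dom_via True that by blast
next
  case False
  then show ?thesis using assms(1) that by (auto simp: ext_dom_def)
qed

lemma f_ext_flow:
  assumes "(x, t) \<in> ext_dom"
  shows "f (ext_flow (x, t)) = Psi y0 (f x) t"
proof (cases "(x, t) \<in> DPhi")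
  case True
  then show ?thesis using f_Phi by (simp add: ext_flow_DPhi)
next
  case False
  then obtain c where c: "(x, t) \<in> dom_via c" using assms by (auto simp: ext_dom_def)
  then have "Psi y0 (f x) c \<in> f ` C" "(chart (Psi y0 (f x) c), t - c) \<in> DPhi"
    by (auto simp: dom_via_iff)
  then show ?thesis using ext_flow_via[OF c] f_Phi by (simp add: Psi_add)
qed

lemma ext_flow_in_saturation:
  assumes p: "(x, t) \<in> dom_via c"
  shows "ext_flow (x, t) \<in> saturation"
proof -
  define w where "w = chart (Psi y0 (f x) c)"
  have w: "w \<in> C" "(w, t - c) \<in> DPhi" using p chart_in_C by (auto simp: dom_via_iff w_def)
  have "(ext_flow (x, t), - (t - c)) \<in> DPhi \<and> Phi (ext_flow (x, t), - (t - c)) = w"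
    using Phi_backward[OF w(2)] ext_flow_via[OF p] by (simp add: w_def)
  then show ?thesis using w(1) unfolding saturation_def by blast
qed

lemma dom_via_shift:
  assumes "u \<in> saturation" "x \<in> saturation" "f u = Psi y0 (f x) s"
  shows "(u, t) \<in> dom_via c \<longleftrightarrow> (x, s + t) \<in> dom_via (s + c)"
    and "jump c (u, t) = jump (s + c) (x, s + t)"
  using assms by (simp_all add: dom_via_iff Psi_add algebra_simps)

lemma ext_flow_group:
  assumes 1: "(x, t1) \<in> ext_dom" and 2: "(x, t1 + t2) \<in> ext_dom"
  shows "(ext_flow (x, t1), t2) \<in> ext_dom \<and> ext_flow (ext_flow (x, t1), t2) = ext_flow (x, t1 + t2)"
proof (cases "(x, t1) \<in> DPhi \<and> (x, t1 + t2) \<in> DPhi")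
  case True
  then show ?thesis
    using Phi_diff[of x t1 "t1 + t2"] by (simp add: ext_flow_DPhi ext_dom_def)
next
  case False
  then have x: "x \<in> saturation" using 1 2 by (auto simp: ext_dom_def dom_via_iff)
  obtain c1 c2 where c1: "(x, t1) \<in> dom_via c1" and c2: "(x, t1 + t2) \<in> dom_via c2"
    using ext_dom_in_dom_via[OF 1 x] ext_dom_in_dom_via[OF 2 x] by metis
  define u where "u = ext_flow (x, t1)"
  have u: "u \<in> saturation" "f u = Psi y0 (f x) t1"
    using ext_flow_in_saturation[OF c1] f_ext_flow[OF 1] by (simp_all add: u_def)
  have via: "(u, t2) \<in> dom_via (c2 - t1)" and shift: "jump (c2 - t1) (u, t2) = jump c2 (x, t1 + t2)"
    using dom_via_shift[OF u(1) x u(2), where t=t2 and c="c2 - t1"] c2 by simp_all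
  have "ext_flow (u, t2) = Phi (jump (c2 - t1) (u, t2))" by (rule ext_flow_via[OF via])
  also have "\<dots> = Phi (jump c2 (x, t1 + t2))" by (simp only: shift)
  also have "\<dots> = ext_flow (x, t1 + t2)" by (rule ext_flow_via[OF c2, symmetric])
  finally show ?thesis using via by (auto simp: u_def ext_dom_def)
qed

lemma is_interval_ext_dom_slice:
  assumes x: "x \<in> D"
  shows "is_interval {t. (x, t) \<in> ext_dom}"
proof (cases "x \<in> saturation")
  case False
  then have "{t. (x, t) \<in> ext_dom} = {t. (x, t) \<in> DPhi}" by (auto simp: ext_dom_def dom_via_iff)
  then show ?thesis using is_interval_DPhi_slice[OF x] by simp
next
  case True
  then obtain a where a: "(x, a) \<in> DPhi" "Phi (x, a) \<in> C" unfolding saturation_def by blast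
  define I where "I = {t. (x, t) \<in> DPhi}"
  define T where "T = {c. Psi y0 (f x) c \<in> f ` C}"
  define J where "J c = {t. (chart (Psi y0 (f x) c), t - c) \<in> DPhi}" for c
  have "a \<in> I" using a(1) by (simp add: I_def)
  have "a \<in> T" unfolding T_def using f_Phi[OF a(1)] a(2) by (metis image_eqI mem_Collect_eq)
  have "is_interval I" using is_interval_DPhi_slice[OF x] by (simp add: I_def)
  have "is_interval T" unfolding is_interval_1 T_def using Psi_in_image_C_mono by blast
  have J_via: "t \<in> J c \<longleftrightarrow> (x, t) \<in> dom_via c" if "c \<in> T" for c t
    using that True by (simp add: J_def T_def dom_via_iff)
  have J: "c \<in> J c" "is_interval (J c)" if "c \<in> T" for c
  proof -
    have "chart (Psi y0 (f x) c) \<in> D" using that chart_in_C C_subset_D by (auto simp: T_def)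
    then show "c \<in> J c" "is_interval (J c)"
      using zero_in_DPhi is_interval_DPhi_slice_shift by (simp_all add: J_def)
  qed
  have "{t. (x, t) \<in> ext_dom} = (I \<union> T) \<union> \<Union>(J ` T)"
  proof (rule subset_antisym)
    show "{t. (x, t) \<in> ext_dom} \<subseteq> (I \<union> T) \<union> \<Union>(J ` T)"
    proof
      fix t assume "t \<in> {t. (x, t) \<in> ext_dom}"
      then consider "t \<in> I" | c where "(x, t) \<in> dom_via c" by (auto simp: ext_dom_def I_def)
      then show "t \<in> (I \<union> T) \<union> \<Union>(J ` T)"
      proof cases
        case (2 c)
        then have "c \<in> T" by (simp add: dom_via_iff T_def)
        then show ?thesis using 2 J_via by blast
      qed blast
    qed
    show "(I \<union> T) \<union> \<Union>(J ` T) \<subseteq> {t. (x, t) \<in> ext_dom}"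
      using J(1) J_via by (fastforce simp: ext_dom_def I_def)
  qed
  moreover have "connected ((I \<union> T) \<union> \<Union>(J ` T))"
  proof (rule connected_Un_UN)
    show "connected (I \<union> T)" using \<open>a \<in> I\<close> \<open>a \<in> T\<close>
      by (intro connected_Un is_interval_connected \<open>is_interval I\<close> \<open>is_interval T\<close>) blast
    show "connected X" "(I \<union> T) \<inter> X \<noteq> {}" if "X \<in> J ` T" for X
      using that J is_interval_connected by blast+
  qed
  ultimately show ?thesis by (simp only: is_interval_connected_1)
qed

lemma is_flow_ext: "is_flow D ext_dom ext_flow"
  unfolding is_flow_def
proof (intro conjI)
  show "open ext_dom" unfolding ext_dom_def using open_DPhi open_dom_via by auto
  show "ext_dom \<subseteq> D \<times> UNIV"
    unfolding ext_dom_def using DPhi_in_D saturation_in_D by (auto simp: dom_via_iff)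
  show "ext_flow ` ext_dom \<subseteq> D"
    using Phi_in_D ext_flow_via by (auto simp: ext_dom_def ext_flow_DPhi dom_via_def)
  have "ext_dom = \<Union>(insert DPhi (range dom_via))" by (auto simp: ext_dom_def)
  moreover have "continuous_on (\<Union>(insert DPhi (range dom_via))) ext_flow"
  proof (rule continuous_on_open_Union)
    fix S assume "S \<in> insert DPhi (range dom_via)"
    then show "open S" using open_DPhi open_dom_via by auto
    show "continuous_on S ext_flow"
      using \<open>S \<in> _\<close> continuous_on_eq[OF continuous_on_Phi] continuous_on_eq[OF continuous_on_Phi_jump]
      by (auto simp: ext_flow_DPhi ext_flow_via)
  qed
  ultimately show "continuous_on ext_dom ext_flow" by simp
  show "\<forall>x\<in>D. is_interval {t. (x, t) \<in> ext_dom} \<and> (x, 0) \<in> ext_dom"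
    using is_interval_ext_dom_slice zero_in_DPhi by (auto simp: ext_dom_def)
  show "\<forall>x\<in>D. ext_flow (x, 0) = x" using zero_in_DPhi by (simp add: ext_flow_DPhi)
  show "\<forall>x t1 t2. (x, t1) \<in> ext_dom \<longrightarrow> (x, t1 + t2) \<in> ext_dom \<longrightarrow>
        (ext_flow (x, t1), t2) \<in> ext_dom \<and> ext_flow (ext_flow (x, t1), t2) = ext_flow (x, t1 + t2)"
    using ext_flow_group by blast
qed

lemma ext_dom_subset_DPhi: "ext_dom \<subseteq> DPhi"
  using is_flow_ext f_ext_flow by (intro flow_domain_maximal) (auto simp: lifts_Psi_def)

lemma Phi_on_C:
  assumes x: "x \<in> C" and t: "t \<ge> 0"
  shows "(x, t) \<in> DPhi" and "Phi (x, t) = chart (Psi y0 (f x) t)"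
proof -
  have "x \<in> D" using x C_subset_D by blast
  have image: "Psi y0 (f x) t \<in> f ` C" using Psi_in_image_C_mono[of "f x" 0 t] x t by simp
  have "x \<in> saturation" using zero_in_DPhi[OF \<open>x \<in> D\<close>] x \<open>x \<in> D\<close> unfolding saturation_def by force
  then have "(x, t) \<in> dom_via t"
    using image chart_in_C C_subset_D zero_in_DPhi by (auto simp: dom_via_iff)
  then show xt: "(x, t) \<in> DPhi" using ext_dom_subset_DPhi by (auto simp: ext_dom_def)
  show "Phi (x, t) = chart (Psi y0 (f x) t)" using Phi_eq_chart[OF x xt image] .
qed

lemma C_subset_basin:
  assumes "x0 \<in> C"
  shows "C \<subseteq> A"
proof
  fix x assume x: "x \<in> C"
  have "isCont chart y0"
    using continuous_on_chart open_image_C y0_in_image_C continuous_on_eq_continuous_at by blast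
  then have "((\<lambda>t. chart (Psi y0 (f x) t)) \<longlongrightarrow> x0) at_top"
    using isCont_tendsto_compose[OF _ tendsto_Psi_at_top] chart_f[OF assms] by metis
  moreover have "\<forall>\<^sub>F t in at_top. chart (Psi y0 (f x) t) = Phi (x, t)"
    using eventually_ge_at_top[of "0::real"] by eventually_elim (use Phi_on_C x in auto)
  ultimately have "((\<lambda>t. Phi (x, t)) \<longlongrightarrow> x0) at_top" by (rule Lim_transform_eventually)
  then show "x \<in> A"
    using Phi_on_C x C_subset_D mem_basin_iff by blast
qed

end

context auxiliary_flow_basin
begin

lemma maximal_basin:
  assumes "open C" "C \<subseteq> D" "inj_on f C" "star_shaped_wrt y0 (f ` C)" "x0 \<in> C"
  shows "C \<subseteq> A"
proof -
  interpret star_chart D f DPhi Phi x0 C by unfold_locales (use assms in auto)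
  show ?thesis using C_subset_basin assms by blast
qed

text \<open>The lift of a small ball around y0 through the local inverse of f at x0 satisfies the
  hypotheses of maximal_basin.\<close>
lemma injective_nbhd_in_basin:
  obtains C0 where "open C0" "inj_on f C0" "x0 \<in> C0" "C0 \<subseteq> A"
proof -
  obtain U h where U: "open U" "x0 \<in> U" "U \<subseteq> D" "open (f ` U)" "homeomorphism U (f ` U) f h"
    using local_homeo x0_in_D unfolding local_homeo_on_def by blast
  have inj: "inj_on f U" using U(5) unfolding homeomorphism_def by (metis inj_on_inverseI)
  obtain r where r: "r > 0" "ball y0 r \<subseteq> f ` U" using U(2,4) open_contains_ball by blast
  define C0 where "C0 = U \<inter> f -` ball y0 r"
  have C0_open: "open C0" unfolding C0_def
    using continuous_open_preimage[OF continuous_on_subset[OF continuous_on_f U(3)] U(1)] by simp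
  have "f ` C0 = ball y0 r" using r(2) by (auto simp: C0_def)
  then have C0_star: "star_shaped_wrt y0 (f ` C0)"
    using r(1) unfolding star_shaped_wrt_def
    by (simp add: closed_segment_subset[OF _ _ convex_ball])
  have "x0 \<in> C0" "C0 \<subseteq> D" "inj_on f C0"
    using U(2,3) r(1) inj by (auto simp: C0_def intro: inj_on_subset)
  then show ?thesis using maximal_basin[OF C0_open _ _ C0_star] C0_open that by blast
qed

lemma basin_forward:
  assumes x: "x \<in> A" and t: "t \<ge> 0"
  shows "Phi (x, t) \<in> A"
proof -
  have xt: "(x, t) \<in> DPhi" using x t mem_basin_iff by blast
  have shift: "(Phi (x, t), s) \<in> DPhi \<and> Phi (Phi (x, t), s) = Phi (x, t + s)" if "s \<ge> 0" for s
    using Phi_diff[OF xt, of "t + s"] x t that mem_basin_iff by simp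
  have "((\<lambda>s. Phi (x, s)) \<longlongrightarrow> x0) at_top" using x mem_basin_iff by blast
  then have "((\<lambda>s. Phi (x, t + s)) \<longlongrightarrow> x0) at_top" by (rule tendsto_at_top_shift)
  moreover have "\<forall>\<^sub>F s in at_top. Phi (x, t + s) = Phi (Phi (x, t), s)"
    using eventually_ge_at_top[of "0::real"] by eventually_elim (use shift in auto)
  ultimately have "((\<lambda>s. Phi (Phi (x, t), s)) \<longlongrightarrow> x0) at_top" by (rule Lim_transform_eventually)
  then show ?thesis using shift Phi_in_D[OF xt] by (simp add: mem_basin_iff)
qed

lemma basin_backward:
  assumes xT: "(x, T) \<in> DPhi" and "T \<ge> 0" and zA: "Phi (x, T) \<in> A"
  shows "x \<in> A"
proof -
  define z where "z = Phi (x, T)"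
  have z_back: "(z, - T) \<in> DPhi" "Phi (z, - T) = x" using Phi_backward[OF xT] by (auto simp: z_def)
  have shift: "(x, T + s) \<in> DPhi \<and> Phi (x, T + s) = Phi (z, s)" if "s \<ge> 0" for s
    using Phi_diff[OF z_back(1), of "s"] zA that z_back(2) mem_basin_iff by (simp add: z_def add.commute)
  have "x \<in> D" using DPhi_in_D[OF xT] .
  have "((\<lambda>s. Phi (z, s)) \<longlongrightarrow> x0) at_top" using zA mem_basin_iff z_def by blast
  then have "((\<lambda>s. Phi (z, - T + s)) \<longlongrightarrow> x0) at_top" by (rule tendsto_at_top_shift)
  moreover have "\<forall>\<^sub>F t in at_top. Phi (z, - T + t) = Phi (x, t)"
    using eventually_ge_at_top[of T]
  proof eventually_elim
    fix t assume "T \<le> t"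
    then show "Phi (z, - T + t) = Phi (x, t)" using shift[of "t - T"] by simp
  qed
  ultimately have "((\<lambda>t. Phi (x, t)) \<longlongrightarrow> x0) at_top" by (rule Lim_transform_eventually)
  moreover have "(x, t) \<in> DPhi" if "t \<ge> 0" for t
    using DPhi_between[OF zero_in_DPhi[OF \<open>x \<in> D\<close>], of "T + t" t] shift[OF that] that \<open>T \<ge> 0\<close>
    by simp
  ultimately show ?thesis using \<open>x \<in> D\<close> by (simp add: mem_basin_iff)
qed

lemma basin_eventually_in:
  assumes "x \<in> A" "open S" "x0 \<in> S"
  shows "\<forall>\<^sub>F t in at_top. Phi (x, t) \<in> S \<and> t \<ge> 0"
proof -
  have "((\<lambda>t. Phi (x, t)) \<longlongrightarrow> x0) at_top" using assms(1) mem_basin_iff by blast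
  from topological_tendstoD[OF this assms(2,3)] eventually_ge_at_top[of 0]
  show ?thesis by (rule eventually_conj)
qed

lemma open_basin: "open A"
  unfolding open_subopen[of A]
proof
  fix x assume x: "x \<in> A"
  obtain C0 where C0: "open C0" "inj_on f C0" "x0 \<in> C0" "C0 \<subseteq> A"
    by (rule injective_nbhd_in_basin)
  obtain T where T: "Phi (x, T) \<in> C0" "T \<ge> 0"
    using eventually_happens'[OF trivial_limit_at_top_linorder basin_eventually_in[OF x C0(1,3)]]
    by blast
  define N where "N = (\<lambda>x'. (x', T)) -` (DPhi \<inter> Phi -` C0)"
  have "open (DPhi \<inter> Phi -` C0)"
    by (rule continuous_open_preimage[OF continuous_on_Phi open_DPhi C0(1)])
  then have "open N" unfolding N_def by (rule continuous_open_vimage) (intro continuous_intros)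
  moreover have "x \<in> N" using x T mem_basin_iff by (simp add: N_def)
  moreover have "N \<subseteq> A"
  proof
    fix x' assume "x' \<in> N"
    then show "x' \<in> A" using basin_backward[of x' T] \<open>T \<ge> 0\<close> C0(4) by (auto simp: N_def)
  qed
  ultimately show "\<exists>T. open T \<and> x \<in> T \<and> T \<subseteq> A" by blast
qed

lemma inj_on_basin: "inj_on f A"
proof
  fix x1 x2 assume x: "x1 \<in> A" "x2 \<in> A" and same: "f x1 = f x2"
  obtain C0 where C0: "open C0" "inj_on f C0" "x0 \<in> C0" "C0 \<subseteq> A"
    by (rule injective_nbhd_in_basin)
  obtain T where T: "Phi (x1, T) \<in> C0" "Phi (x2, T) \<in> C0" "T \<ge> 0"
    using eventually_happens'[OF trivial_limit_at_top_linorder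
        eventually_conj[OF basin_eventually_in[OF x(1) C0(1,3)] basin_eventually_in[OF x(2) C0(1,3)]]]
    by blast
  have xT: "(x1, T) \<in> DPhi" "(x2, T) \<in> DPhi" using x T(3) mem_basin_iff by blast+
  then have "f (Phi (x1, T)) = f (Phi (x2, T))" using same by (simp add: f_Phi)
  then have same_T: "Phi (x1, T) = Phi (x2, T)" using inj_onD[OF C0(2) _ T(1,2)] by blast
  have "x1 = Phi (Phi (x1, T), - T)" using Phi_backward[OF xT(1)] by simp
  also have "\<dots> = Phi (Phi (x2, T), - T)" by (simp only: same_T)
  also have "\<dots> = x2" using Phi_backward[OF xT(2)] by simp
  finally show "x1 = x2" .
qed

lemma star_shaped_basin_image: "star_shaped_wrt y0 (f ` A)"
  unfolding star_shaped_wrt_def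
proof (intro conjI ballI subsetI)
  obtain C0 where "x0 \<in> C0" "C0 \<subseteq> A" by (rule injective_nbhd_in_basin)
  then show y0: "y0 \<in> f ` A" by blast
  fix y p assume "y \<in> f ` A" "p \<in> closed_segment y0 y"
  then obtain x where x: "x \<in> A" "y = f x" by blast
  show "p \<in> f ` A"
  proof (cases "p = y0")
    case False
    then obtain t where "t \<ge> 0" "Psi y0 y t = p"
      using closed_segment_eq_Psi \<open>p \<in> closed_segment y0 y\<close> by blast
    moreover have "(x, t) \<in> DPhi" using x(1) \<open>t \<ge> 0\<close> mem_basin_iff by blast
    ultimately have "f (Phi (x, t)) = p" using x(2) f_Phi by simp
    then show ?thesis using basin_forward[OF x(1) \<open>t \<ge> 0\<close>] by blast
  qed (use y0 in simp)
qed

end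

theorem proposition2p1:
  fixes D :: "'a::banach set" and f :: "'a \<Rightarrow> 'b::banach"
    and DPhi :: "('a \<times> real) set" and Phi :: "'a \<times> real \<Rightarrow> 'a"
  assumes "open D" and "connected D" and "D \<noteq> {}"
    and "local_homeo_on D f"
    and "x0 \<in> D"
    and "auxiliary_flow D f x0 DPhi Phi"
  shows "open (attraction_basin D x0 DPhi Phi)
    \<and> inj_on f (attraction_basin D x0 DPhi Phi)
    \<and> star_shaped_wrt (f x0) (f ` attraction_basin D x0 DPhi Phi)
    \<and> (\<forall>C. open C \<and> connected C \<and> C \<subseteq> D \<and> x0 \<in> C \<and> inj_on f C
            \<and> star_shaped_wrt (f x0) (f ` C) \<longrightarrow> C \<subseteq> attraction_basin D x0 DPhi Phi)"
proof -
  interpret auxiliary_flow_basin D f DPhi Phi x0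
    using assms by unfold_locales
  show ?thesis using open_basin inj_on_basin star_shaped_basin_image maximal_basin by blast
qed

end
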